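(* Let $(\mathcal{X},\mathcal{F},\sigma)$ be a probability space with an $\alpha$-homogeneous atomic filtration, $0<\alpha\le1/2$. Let $w\in L^1(\mathcal{X})$, $w\ge0$, and suppose that for a cube $Q_0\in\mathcal{D}$ and a constant $A$ we have $\langle w^*\rangle_{Q_0}\le A\langle w\rangle_{Q_0}$. Let $E\subset Q_0$ be a union of some cubes in $\mathcal{D}(Q_0)=\{K\in\mathcal{D}:K\subset Q_0\}$. Then \[ w(E)\le 2A\,\frac{\ln(2/\alpha)}{\ln(|Q_0|/|E|)}\,w(Q_0), \] where $w(F)=\int_F w\,d\sigma$.
   Context: An atomic filtration on a probability space $(\mathcal{X},\mathcal{F},\sigma)$ is an increasing sequence of $\sigma$-algebras $\mathcal{F}_n\subset\mathcal{F}$, $n\ge0$, with $\mathcal{F}_0=\{\varnothing,\mathcal{X}\}$, $\mathcal{F}$ generated by the $\mathcal{F}_n$, and such that for each $n$ there is a countable collection $\mathcal{D}_n$ of disjoint sets ("cubes") with every set of $\mathcal{F}_n$ a union of sets of $\mathcal{D}_n$. Write $\mathcal{D}=\bigcup_n\mathcal{D}_n$, $|A|=\sigma(A)$, and for $Q\in\mathcal{D}_n$ let $\operatorname{ch}Q=\{R\in\mathcal{D}_{n+1}:R\subset Q\}$. The filtration is $\alpha$-homogeneous if $|Q'|\ge\alpha|Q|$ for every cube $Q$ and every $Q'\in\operatorname{ch}Q$. For $|A|>0$, $\langle f\rangle_A=|A|^{-1}\int_A f$. Let $\mathbf{E}_nf=\sum_{Q\in\mathcal{D}_n}\langle f\rangle_Q\mathbf{1}_Q$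 and $f^*(x)=\sup_{n\ge0}|\mathbf{E}_nf(x)|$ (martingale maximal function). *)

theory Defs
  imports "HOL-Probability.Probability"
begin

definition atomic_filtration ::
  "'a measure \<Rightarrow> (nat \<Rightarrow> 'a set set) \<Rightarrow> (nat \<Rightarrow> 'a set set) \<Rightarrow> bool" where
  "atomic_filtration M F D \<longleftrightarrow>
     (\<forall>n. sigma_algebra (space M) (F n) \<and> F n \<subseteq> sets M) \<and>
     (\<forall>n. F n \<subseteq> F (Suc n)) \<and>
     F 0 = {{}, space M} \<and>
     sets M = sigma_sets (space M) (\<Union>n. F n) \<and>
     (\<forall>n. countable (D n) \<and> disjoint (D n) \<and> D n \<subseteq> F n \<and>
          (\<forall>A\<in>F n. \<exists>S\<subseteq>D n. A = \<Union>S))"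

definition homogeneous :: "'a measure \<Rightarrow> (nat \<Rightarrow> 'a set set) \<Rightarrow> real \<Rightarrow> bool" where
  "homogeneous M D \<alpha> \<longleftrightarrow>
     (\<forall>n. \<forall>Q\<in>D n. \<forall>Q'\<in>D (Suc n). Q' \<subseteq> Q \<longrightarrow> measure M Q' \<ge> \<alpha> * measure M Q)"

definition avg :: "'a measure \<Rightarrow> 'a set \<Rightarrow> ('a \<Rightarrow> real) \<Rightarrow> real" where
  "avg M A f = (LINT x:A|M. f x) / measure M A"

definition cond_exp_n :: "'a measure \<Rightarrow> (nat \<Rightarrow> 'a set set) \<Rightarrow> nat \<Rightarrow> ('a \<Rightarrow> real) \<Rightarrow> 'a \<Rightarrow> real" where
  "cond_exp_n M D n f x = (\<Sum>\<^sub>\<infinity>Q\<in>D n. avg M Q f * indicator Q x)"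

definition maximal_fn :: "'a measure \<Rightarrow> (nat \<Rightarrow> 'a set set) \<Rightarrow> ('a \<Rightarrow> real) \<Rightarrow> 'a \<Rightarrow> ennreal" where
  "maximal_fn M D f x = (SUP n. ennreal \<bar>cond_exp_n M D n f x\<bar>)"

end

theory Submission
  imports Defs
begin

text \<open>Put \<open>\<beta> = \<alpha>/2\<close> and let \<open>G i\<close> be the union of the maximal cubes \<open>K \<subseteq> Q0\<close> with
  \<open>|K \<inter> E| \<ge> \<beta>^i |K|\<close>. Then \<open>E \<subseteq> G 0 \<subseteq> G 1 \<subseteq> \<dots>\<close> and \<open>\<beta>^i |G i| \<le> |E|\<close>. By
  homogeneity the parent of a maximal cube of level \<open>i + 1\<close> has \<open>E\<close>-density below
  \<open>\<beta>^(i+1)\<close>, so at most half of that cube lies in \<open>G i\<close>; as \<open>w* \<ge> \<langle>w\<rangle>\<^sub>K\<close> on every cube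
  \<open>K\<close>, the layer \<open>G (i+1) - G i\<close> carries \<open>w*\<close>-mass at least \<open>w(G (i+1))/2 \<ge> w(E)/2\<close>.
  Summing over the \<open>m\<close> layers with \<open>\<beta>^(m+1) |Q0| \<le> |E| < \<beta>^m |Q0|\<close> and bounding the
  remainder by \<open>\<langle>w\<rangle>\<^sub>Q\<^sub>0 |Q0 - G m|\<close> gives
  \<open>m w(E)/2 + \<langle>w\<rangle>\<^sub>Q\<^sub>0 |Q0 - G m| \<le> \<integral>\<^sub>Q\<^sub>0 w* \<le> A w(Q0)\<close>; a convexity estimate for
  the fractional part of the base-\<open>1/\<beta>\<close> logarithm of \<open>|Q0|/|E|\<close> turns this into the
  claim.\<close>

lemma cmult_emeasure_UN_Int_le:
  assumes "countable I" "\<And>i. i \<in> I \<Longrightarrow> X i \<in> sets M" "disjoint_family_on X I"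
    and "Y1 \<in> sets M" "Y2 \<in> sets M" "sets N1 = sets M" "sets N2 = sets M"
    and "\<And>i. i \<in> I \<Longrightarrow> c * emeasure N2 (X i \<inter> Y2) \<le> emeasure N1 (X i \<inter> Y1)"
  shows "c * emeasure N2 ((\<Union>i\<in>I. X i) \<inter> Y2) \<le> emeasure N1 ((\<Union>i\<in>I. X i) \<inter> Y1)"
proof -
  have UN_Int: "(\<Union>i\<in>I. X i) \<inter> Y = (\<Union>i\<in>I. X i \<inter> Y)" for Y by auto
  have disj: "disjoint_family_on (\<lambda>i. X i \<inter> Y) I" for Y
    using assms(3) unfolding disjoint_family_on_def by auto
  have emeasure_UN: "emeasure N ((\<Union>i\<in>I. X i) \<inter> Y) = (\<integral>\<^sup>+i. emeasure N (X i \<inter> Y) \<partial>count_space I)"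
    if "sets N = sets M" "Y \<in> sets M" for N Y
    unfolding UN_Int by (rule emeasure_UN_countable) (use assms that disj in auto)
  show ?thesis
    unfolding emeasure_UN[OF assms(7,5)] emeasure_UN[OF assms(6,4)]
    by (subst nn_integral_cmult[symmetric]) (auto intro!: nn_integral_mono assms(8))
qed

lemma le_two_mult_one_minus_exp:
  fixes b s :: real
  assumes s: "0 < s" "s \<le> b" and exp_b: "exp (- b) \<le> 1/4"
  shows "s \<le> 2 * b * (1 - exp (- s))"
proof -
  define l where "l = s / b"
  have b: "0 < b" using s by simp
  have l: "0 \<le> l" "l \<le> 1" unfolding l_def using b s by auto
  have "exp ((1 - l) *\<^sub>R 0 + l *\<^sub>R (- b)) \<le> (1 - l) * exp 0 + l * exp (- b)"
    by (rule convex_onD[OF exp_convex]) (use l in auto)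
  moreover have "(1 - l) *\<^sub>R 0 + l *\<^sub>R (- b) = - s" unfolding l_def using b by simp
  ultimately have "exp (- s) \<le> 1 - l + l * exp (- b)" by simp
  also have "\<dots> \<le> 1 - l + l * (1/4)" using exp_b l by (intro add_left_mono mult_left_mono)
  also have "\<dots> = 1 - 3/4 * l" by simp
  finally have "2 * b * (3/4 * l) \<le> 2 * b * (1 - exp (- s))" using b by (intro mult_left_mono) auto
  moreover have "2 * b * (3/4 * l) = 3/2 * s" unfolding l_def using b by simp
  ultimately show ?thesis using s by linarith
qed

lemma power_bracket:
  fixes \<beta> e q :: real
  assumes "0 < \<beta>" "\<beta> < 1" "0 < e" "e < q"
  obtains m where "\<beta> ^ Suc m * q \<le> e" "e < \<beta> ^ m * q"
proof -
  have q: "0 < q" using assms by simp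
  obtain N where "\<beta> ^ N < e / q" using real_arch_pow_inv[of "e / q" \<beta>] assms q by auto
  then have N: "\<beta> ^ N * q \<le> e" using q by (simp add: pos_less_divide_eq less_imp_le)
  define m0 where "m0 = (LEAST N. \<beta> ^ N * q \<le> e)"
  have m0: "\<beta> ^ m0 * q \<le> e" unfolding m0_def by (rule LeastI) (rule N)
  then have "m0 \<noteq> 0" using assms(4) by (cases m0) auto
  then obtain m where m: "m0 = Suc m" using not0_implies_Suc by blast
  have "e < \<beta> ^ m * q"
  proof (rule ccontr)
    assume "\<not> e < \<beta> ^ m * q"
    then have "m0 \<le> m" unfolding m0_def by (intro Least_le) simp
    then show False using m by simp
  qed
  then show ?thesis using that m0 m by blast
qed

lemma ln_ratio_le_layers:
  fixes \<beta> e q :: real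
  assumes \<beta>: "0 < \<beta>" "\<beta> \<le> 1/4" and e: "0 < e"
    and bracket: "\<beta> ^ Suc m * q \<le> e" "e < \<beta> ^ m * q"
  shows "ln (q / e) \<le> 2 * ln (1 / \<beta>) * (real m / 2 + 1 - e / (\<beta> ^ m * q))"
proof -
  define b where "b = ln (1 / \<beta>)"
  define r where "r = e / (\<beta> ^ m * q)"
  have \<beta>m: "0 < \<beta> ^ m" using \<beta> by simp
  have \<beta>mq: "0 < \<beta> ^ m * q" using e bracket by linarith
  then have q: "0 < q" using \<beta>m zero_less_mult_pos by blast
  have r: "0 < r" "r < 1" "\<beta> \<le> r"
    unfolding r_def using e bracket \<beta>mq by (auto simp: pos_le_divide_eq mult.assoc)
  have "q / e = (1 / \<beta>) ^ m * (1 / r)"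
    unfolding r_def using \<beta> e q by (simp add: power_one_over)
  then have ln_qe: "ln (q / e) = real m * b - ln r"
    unfolding b_def using \<beta> r by (simp add: ln_mult ln_realpow ln_div)
  have b: "b = - ln \<beta>" unfolding b_def using \<beta> by (simp add: ln_div)
  then have exp_b: "exp (- b) = \<beta>" using \<beta> by simp
  have "- ln r \<le> 2 * b * (1 - exp (- (- ln r)))"
  proof (rule le_two_mult_one_minus_exp)
    show "0 < - ln r" using r by simp
    show "- ln r \<le> b" unfolding b using r \<beta> by simp
    show "exp (- b) \<le> 1/4" using exp_b \<beta> by simp
  qed
  then have "- ln r \<le> 2 * b * (1 - r)" using r by simp
  then show ?thesis unfolding ln_qe r_def[symmetric] b_def[symmetric] by (simp add: algebra_simps)
qed

locale cube_filtration =
  fixes M :: "'a measure" and F D :: "nat \<Rightarrow> 'a set set"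
  assumes atomic: "atomic_filtration M F D"
begin

lemma cube_sets: "C \<in> D n \<Longrightarrow> C \<in> sets M"
  using atomic unfolding atomic_filtration_def by blast

lemma countable_cubes: "countable (D n)"
  using atomic unfolding atomic_filtration_def by blast

lemma cube_subset_space: "C \<in> D n \<Longrightarrow> C \<subseteq> space M"
  using cube_sets sets.sets_into_space by blast

lemma disjoint_cubes: "disjoint (D n)"
  using atomic unfolding atomic_filtration_def by blast

lemma cube_unique: "C1 \<in> D n \<Longrightarrow> C2 \<in> D n \<Longrightarrow> x \<in> C1 \<Longrightarrow> x \<in> C2 \<Longrightarrow> C1 = C2"
  using disjoint_cubes disjointD by blast

lemma cubes_subset_filtration: "D n \<subseteq> F n"
  using atomic unfolding atomic_filtration_def by blast

lemma filtration_set_eq_Union_cubes: "A \<in> F n \<Longrightarrow> \<exists>S\<subseteq>D n. A = \<Union>S"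
  using atomic unfolding atomic_filtration_def by blast

lemma cube_0_cases: "C \<in> D 0 \<Longrightarrow> C = {} \<or> C = space M"
proof -
  have "F 0 = {{}, space M}" using atomic by (simp add: atomic_filtration_def)
  then show "C \<in> D 0 \<Longrightarrow> C = {} \<or> C = space M" using cubes_subset_filtration[of 0] by auto
qed

lemma filtration_mono: "m \<le> n \<Longrightarrow> F m \<subseteq> F n"
  using atomic unfolding atomic_filtration_def by (metis lift_Suc_mono_le)

lemma cube_cover:
  assumes "x \<in> space M" obtains C where "C \<in> D n" "x \<in> C"
proof -
  have "space M \<in> F 0" using atomic unfolding atomic_filtration_def by blast
  then have "space M \<in> F n" using filtration_mono[of 0 n] by blast
  then show ?thesis using filtration_set_eq_Union_cubes assms that by blast
qed

lemma cube_subset_Suc: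
  assumes "C \<in> D (Suc m)" "C' \<in> D m" "x \<in> C" "x \<in> C'" shows "C \<subseteq> C'"
proof -
  have "C' \<in> F (Suc m)"
    using assms(2) cubes_subset_filtration filtration_mono[of m "Suc m"] by auto
  then obtain S where "S \<subseteq> D (Suc m)" "C' = \<Union>S"
    using filtration_set_eq_Union_cubes by blast
  then show ?thesis using assms cube_unique by blast
qed

lemma cube_nested:
  assumes "m \<le> n" "C \<in> D n" "C' \<in> D m" "x \<in> C" "x \<in> C'" shows "C \<subseteq> C'"
  using assms
proof (induction n arbitrary: C)
  case 0
  then show ?case using cube_unique by auto
next
  case (Suc n)
  show ?case
  proof (cases "m = Suc n")
    case True
    then show ?thesis using Suc cube_unique by blast
  next
    case False
    obtain P where P: "P \<in> D n" "x \<in> P"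
      using cube_cover cube_subset_space Suc.prems by blast
    have "C \<subseteq> P" using cube_subset_Suc Suc.prems P by blast
    also have "P \<subseteq> C'" using Suc P False by auto
    finally show ?thesis .
  qed
qed

lemma cond_exp_n_cube: assumes "C \<in> D n" "x \<in> C" shows "cond_exp_n M D n f x = avg M C f"
proof -
  have "cond_exp_n M D n f x = (\<Sum>\<^sub>\<infinity>Q\<in>{C}. avg M Q f * indicator Q x)"
    unfolding cond_exp_n_def
    by (rule infsum_cong_neutral) (use assms cube_unique in \<open>auto simp: indicator_def\<close>)
  then show ?thesis using assms by simp
qed

lemma cond_exp_n_measurable: "cond_exp_n M D n f \<in> borel_measurable M"
proof (rule measurableI)
  fix B :: "real set"
  have "cond_exp_n M D n f -` B \<inter> space M = \<Union>{C \<in> D n. avg M C f \<in> B}"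
  proof (intro equalityI subsetI)
    fix x assume x: "x \<in> cond_exp_n M D n f -` B \<inter> space M"
    then obtain C where "C \<in> D n" "x \<in> C" using cube_cover by blast
    then show "x \<in> \<Union>{C \<in> D n. avg M C f \<in> B}" using cond_exp_n_cube x by auto
  next
    fix x assume "x \<in> \<Union>{C \<in> D n. avg M C f \<in> B}"
    then show "x \<in> cond_exp_n M D n f -` B \<inter> space M"
      using cond_exp_n_cube cube_subset_space by blast
  qed
  also have "\<dots> \<in> sets M"
    by (rule sets.countable_Union)
       (use countable_cubes cube_sets in \<open>auto intro: countable_subset\<close>)
  finally show "cond_exp_n M D n f -` B \<inter> space M \<in> sets M" .
qed auto

lemma maximal_fn_measurable: "maximal_fn M D f \<in> borel_measurable M"
  unfolding maximal_fn_def using cond_exp_n_measurable by measurable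

lemma avg_le_maximal_fn:
  assumes "C \<in> D n" "x \<in> C" shows "ennreal \<bar>avg M C f\<bar> \<le> maximal_fn M D f x"
  unfolding maximal_fn_def using cond_exp_n_cube[OF assms, of f, symmetric]
  by (auto intro: SUP_upper2)

end

locale cube_weight_setting = cube_filtration M F D
  for M :: "'a measure" and F D +
  fixes \<alpha> :: real and w :: "'a \<Rightarrow> real" and Q0 E :: "'a set" and n0 :: nat
  assumes prob: "prob_space M" and homogeneous: "homogeneous M D \<alpha>"
    and \<alpha>_pos: "0 < \<alpha>" and \<alpha>_le_half: "\<alpha> \<le> 1/2"
    and w_integrable: "integrable M w" and w_nonneg: "\<forall>x\<in>space M. 0 \<le> w x"
    and Q0_cube: "Q0 \<in> D n0"
    and E_Union_cubes: "\<exists>S \<subseteq> {K \<in> (\<Union>n. D n). K \<subseteq> Q0}. E = \<Union>S"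
begin

sublocale prob_space M by (rule prob)

lemma Q0_sets: "Q0 \<in> sets M"
  using Q0_cube cube_sets by blast

lemma E_subset_Q0: "E \<subseteq> Q0"
  using E_Union_cubes by blast

lemma E_sets: "E \<in> sets M"
proof -
  obtain S where S: "S \<subseteq> {K \<in> (\<Union>n. D n). K \<subseteq> Q0}" "E = \<Union>S"
    using E_Union_cubes by blast
  have "countable S"
    by (rule countable_subset[of _ "\<Union>n. D n"]) (use S countable_cubes in auto)
  then show ?thesis
    unfolding S(2) by (rule sets.countable_Union) (use S cube_sets in blast)
qed

lemma E_cube_cover:
  assumes "x \<in> E" obtains k K where "K \<in> D k" "x \<in> K" "K \<subseteq> E"
proof -
  obtain S where S: "S \<subseteq> {K \<in> (\<Union>n. D n). K \<subseteq> Q0}" "E = \<Union>S"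
    using E_Union_cubes by blast
  then obtain K where "K \<in> S" "x \<in> K" using assms by blast
  then show ?thesis using S that by blast
qed

lemma parent_cube:
  assumes "C \<in> D (Suc n)" "x \<in> C"
  obtains P where "P \<in> D n" "x \<in> P" "C \<subseteq> P" "\<alpha> * measure M P \<le> measure M C"
proof -
  obtain P where P: "P \<in> D n" "x \<in> P" using cube_cover cube_subset_space assms by blast
  moreover have "C \<subseteq> P" using cube_subset_Suc assms P by blast
  moreover have "\<alpha> * measure M P \<le> measure M C"
    using homogeneous assms(1) P(1) \<open>C \<subseteq> P\<close> unfolding homogeneous_def by blast
  ultimately show ?thesis using that by blast
qed

lemma cube_measure_pos: "C \<in> D n \<Longrightarrow> C \<noteq> {} \<Longrightarrow> 0 < measure M C"
proof (induction n arbitrary: C)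
  case 0
  then have "C = space M" using cube_0_cases by blast
  then show ?case using prob_space by simp
next
  case (Suc n)
  then obtain x where "x \<in> C" by blast
  then obtain P where P: "P \<in> D n" "x \<in> P" "\<alpha> * measure M P \<le> measure M C"
    using parent_cube Suc.prems by blast
  then have "0 < \<alpha> * measure M P" using Suc.IH \<alpha>_pos by (intro mult_pos_pos) auto
  then show ?case using P by linarith
qed

definition \<beta> :: real where "\<beta> = \<alpha> / 2"

lemma \<beta>_pos: "0 < \<beta>" and \<beta>_le: "\<beta> \<le> 1/4"
  using \<alpha>_pos \<alpha>_le_half unfolding \<beta>_def by auto

lemma \<beta>_power_antimono: "i \<le> j \<Longrightarrow> \<beta> ^ j \<le> \<beta> ^ i"
  using \<beta>_pos \<beta>_le by (intro power_decreasing) auto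

definition stop_cubes :: "nat \<Rightarrow> nat \<Rightarrow> 'a set set" where
  "stop_cubes i n = {C \<in> D n. C \<noteq> {} \<and> C \<subseteq> Q0 \<and> n0 \<le> n \<and>
      \<beta> ^ i * measure M C \<le> measure M (C \<inter> E) \<and>
      (\<forall>m. \<forall>C'\<in>D m. n0 \<le> m \<longrightarrow> m < n \<longrightarrow> C \<subseteq> C' \<longrightarrow>
          measure M (C' \<inter> E) < \<beta> ^ i * measure M C')}"

definition stop_region :: "nat \<Rightarrow> 'a set" where
  "stop_region i = (\<Union>n. \<Union>(stop_cubes i n))"

lemma stop_cubes_subset: "stop_cubes i n \<subseteq> D n"
  unfolding stop_cubes_def by blast

lemma stop_cube_dense: "C \<in> stop_cubes i n \<Longrightarrow> \<beta> ^ i * measure M C \<le> measure M (C \<inter> E)"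
  unfolding stop_cubes_def by blast

lemma stop_cube_maximal:
  assumes "C \<in> stop_cubes i n" "C' \<in> D m" "n0 \<le> m" "m < n" "C \<subseteq> C'"
  shows "measure M (C' \<inter> E) < \<beta> ^ i * measure M C'"
  using assms unfolding stop_cubes_def by blast

lemma stop_cube_sets: "C \<in> stop_cubes i n \<Longrightarrow> C \<in> sets M"
  using stop_cubes_subset cube_sets by blast

lemma stop_region_sets: "stop_region i \<in> sets M"
proof -
  have "\<Union>(stop_cubes i n) \<in> sets M" for n
    by (rule sets.countable_Union)
       (use countable_subset[OF stop_cubes_subset countable_cubes] stop_cube_sets in auto)
  then show ?thesis unfolding stop_region_def by blast
qed

lemma stop_region_subset_Q0: "stop_region i \<subseteq> Q0"
  unfolding stop_region_def stop_cubes_def by blast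

lemma stop_cubes_disjoint_levels:
  assumes C1: "C1 \<in> stop_cubes i n1" and C2: "C2 \<in> stop_cubes i n2" and "n1 < n2"
  shows "C1 \<inter> C2 = {}"
proof (rule ccontr)
  assume "C1 \<inter> C2 \<noteq> {}"
  then obtain x where "x \<in> C1" "x \<in> C2" by blast
  then have "C2 \<subseteq> C1" using cube_nested[of n1 n2 C2 C1 x] assms stop_cubes_subset by auto
  moreover have "C1 \<in> D n1" "n0 \<le> n1" using C1 unfolding stop_cubes_def by auto
  ultimately have "measure M (C1 \<inter> E) < \<beta> ^ i * measure M C1"
    using stop_cube_maximal[OF C2] \<open>n1 < n2\<close> by blast
  then show False using stop_cube_dense[OF C1] by linarith
qed

lemma stop_cubes_disjoint:
  assumes C1: "C1 \<in> stop_cubes i n1" and C2: "C2 \<in> stop_cubes i n2" and "(n1, C1) \<noteq> (n2, C2)"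
  shows "C1 \<inter> C2 = {}"
proof -
  consider "n1 < n2" | "n2 < n1" | "n1 = n2" "C1 \<noteq> C2" using assms(3) by fastforce
  then show ?thesis
  proof cases
    case 1
    then show ?thesis by (rule stop_cubes_disjoint_levels[OF C1 C2])
  next
    case 2
    then have "C2 \<inter> C1 = {}" by (rule stop_cubes_disjoint_levels[OF C2 C1])
    then show ?thesis by auto
  next
    case 3
    then have "C1 \<in> D n1" "C2 \<in> D n1" using C1 C2 stop_cubes_subset by blast+
    then show ?thesis using cube_unique \<open>C1 \<noteq> C2\<close> by (simp add: disjoint_iff) blast
  qed
qed

lemma cmult_emeasure_stop_region_le:
  assumes "Y1 \<in> sets M" "Y2 \<in> sets M" "sets N1 = sets M" "sets N2 = sets M"
    and "\<And>n C. C \<in> stop_cubes i n \<Longrightarrow> c * emeasure N2 (C \<inter> Y2) \<le> emeasure N1 (C \<inter> Y1)"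
  shows "c * emeasure N2 (stop_region i \<inter> Y2) \<le> emeasure N1 (stop_region i \<inter> Y1)"
proof -
  define I where "I = Sigma UNIV (stop_cubes i)"
  have region: "stop_region i = (\<Union>p\<in>I. snd p)"
    unfolding stop_region_def I_def by force
  have countable: "countable I"
    unfolding I_def
    by (rule countable_SIGMA) (auto intro: countable_subset[OF stop_cubes_subset countable_cubes])
  have disjoint: "disjoint_family_on snd I"
    unfolding disjoint_family_on_def I_def using stop_cubes_disjoint by fastforce
  show ?thesis
    unfolding region
  proof (rule cmult_emeasure_UN_Int_le[OF countable _ disjoint assms(1-4)])
    fix p assume "p \<in> I"
    then show "snd p \<in> sets M" "c * emeasure N2 (snd p \<inter> Y2) \<le> emeasure N1 (snd p \<inter> Y1)"
      unfolding I_def using stop_cube_sets assms(5) by auto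
  qed
qed

lemma cmult_measure_stop_region_le:
  assumes c: "0 \<le> c" and "Y1 \<in> sets M" "Y2 \<in> sets M"
    and cube_le: "\<And>n C. C \<in> stop_cubes i n \<Longrightarrow> c * measure M (C \<inter> Y2) \<le> measure M (C \<inter> Y1)"
  shows "c * measure M (stop_region i \<inter> Y2) \<le> measure M (stop_region i \<inter> Y1)"
proof -
  have emeasure_cmult: "ennreal c * emeasure M X = ennreal (c * measure M X)" for X
    by (simp add: emeasure_eq_measure ennreal_mult[OF c measure_nonneg])
  have "ennreal c * emeasure M (stop_region i \<inter> Y2) \<le> emeasure M (stop_region i \<inter> Y1)"
  proof (rule cmult_emeasure_stop_region_le[OF assms(2,3) refl refl])
    fix n C assume "C \<in> stop_cubes i n"
    then show "ennreal c * emeasure M (C \<inter> Y2) \<le> emeasure M (C \<inter> Y1)"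
      unfolding emeasure_cmult unfolding emeasure_eq_measure by (intro ennreal_leI cube_le)
  qed
  then show ?thesis
    unfolding emeasure_cmult unfolding emeasure_eq_measure by (simp add: ennreal_le_iff)
qed

lemma mem_stop_region:
  assumes "x \<in> Q0" "n0 \<le> n" "C \<in> D n" "x \<in> C" "\<beta> ^ i * measure M C \<le> measure M (C \<inter> E)"
  shows "x \<in> stop_region i"
proof -
  define P where "P m \<longleftrightarrow> n0 \<le> m \<and> (\<exists>C'\<in>D m. x \<in> C' \<and> \<beta> ^ i * measure M C' \<le> measure M (C' \<inter> E))"
    for m
  have "P n" using assms unfolding P_def by blast
  define m where "m = (LEAST m. P m)"
  have "P m" unfolding m_def by (rule LeastI[of P n]) fact
  then obtain C' where C': "C' \<in> D m" "x \<in> C'" "\<beta> ^ i * measure M C' \<le> measure M (C' \<inter> E)"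
    and "n0 \<le> m" unfolding P_def by blast
  have "C' \<subseteq> Q0" using cube_nested[of n0 m C' Q0 x] C' Q0_cube assms(1) \<open>n0 \<le> m\<close> by blast
  have "C' \<in> stop_cubes i m"
    unfolding stop_cubes_def
  proof (intro CollectI conjI allI ballI impI)
    fix m' C'' assume C'': "C'' \<in> D m'" "n0 \<le> m'" "m' < m" "C' \<subseteq> C''"
    show "measure M (C'' \<inter> E) < \<beta> ^ i * measure M C''"
    proof (rule ccontr)
      assume "\<not> ?thesis"
      then have "P m'" unfolding P_def using C'' C' by auto
      then have "m \<le> m'" unfolding m_def by (rule Least_le)
      then show False using C'' by simp
    qed
  qed (use C' \<open>C' \<subseteq> Q0\<close> \<open>n0 \<le> m\<close> in auto)
  then show ?thesis unfolding stop_region_def using C' by blast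
qed

lemma stop_region_mono: assumes "i \<le> j" shows "stop_region i \<subseteq> stop_region j"
proof
  fix x assume "x \<in> stop_region i"
  then obtain n C where C: "C \<in> stop_cubes i n" "x \<in> C" unfolding stop_region_def by blast
  then have "C \<in> D n" "n0 \<le> n" "C \<subseteq> Q0" "\<beta> ^ i * measure M C \<le> measure M (C \<inter> E)"
    unfolding stop_cubes_def by blast+
  moreover have "\<beta> ^ j * measure M C \<le> \<beta> ^ i * measure M C"
    using \<beta>_power_antimono[OF assms] by (intro mult_right_mono) auto
  ultimately show "x \<in> stop_region j" using mem_stop_region[of x n C j] C by auto
qed

lemma E_subset_stop_region: "E \<subseteq> stop_region i"
proof
  fix x assume "x \<in> E"
  then obtain k K where K: "K \<in> D k" "x \<in> K" "K \<subseteq> E" by (rule E_cube_cover)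
  have x: "x \<in> Q0" using \<open>x \<in> E\<close> E_subset_Q0 by blast
  obtain C where C: "C \<in> D (max k n0)" "x \<in> C" using cube_cover cube_subset_space K by blast
  have "C \<subseteq> E"
  proof (cases "k \<le> n0")
    case True
    then have "C = Q0" using C cube_unique[of C n0 Q0 x] Q0_cube x by (simp add: max_def)
    moreover have "Q0 \<subseteq> K" using cube_nested[of k n0 Q0 K x] True Q0_cube K x by blast
    ultimately show ?thesis using K by blast
  next
    case False
    then show ?thesis using C cube_unique[of C k K x] K by (simp add: max_def)
  qed
  then have "C \<inter> E = C" by blast
  then have "x \<in> stop_region 0" using mem_stop_region[of x "max k n0" C 0] C x by simp
  then show "x \<in> stop_region i" using stop_region_mono by blast
qed

lemma measure_stop_region_le: "\<beta> ^ i * measure M (stop_region i) \<le> measure M E"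
proof -
  have "\<beta> ^ i * measure M (stop_region i \<inter> space M) \<le> measure M (stop_region i \<inter> E)"
  proof (rule cmult_measure_stop_region_le)
    fix n C assume "C \<in> stop_cubes i n"
    then show "\<beta> ^ i * measure M (C \<inter> space M) \<le> measure M (C \<inter> E)"
      using stop_cube_sets stop_cube_dense by simp
  qed (use \<beta>_pos E_sets in auto)
  also have "\<dots> \<le> measure M E" by (rule finite_measure_mono[OF Int_lower2 E_sets])
  finally show ?thesis using stop_region_sets by simp
qed

lemma stop_cube_level_gt:
  assumes C: "C \<in> stop_cubes j n" and level: "measure M E < \<beta> ^ j * measure M Q0"
  shows "n0 < n"
proof (rule ccontr)
  assume "\<not> n0 < n"
  with C have "n = n0" "C \<in> D n" "C \<noteq> {}" "C \<subseteq> Q0"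
    "\<beta> ^ j * measure M C \<le> measure M (C \<inter> E)"
    unfolding stop_cubes_def by auto
  then have "C = Q0" using cube_unique Q0_cube by blast
  then show False using \<open>\<beta> ^ j * measure M C \<le> measure M (C \<inter> E)\<close> level E_subset_Q0
    by (simp add: Int_absorb1)
qed

lemma stop_cube_density_in_next:
  assumes C: "C \<in> stop_cubes (Suc j) n" and C': "C' \<in> stop_cubes j n'"
  shows "\<beta> ^ j * measure M (C' \<inter> C) \<le> measure M (C' \<inter> (C \<inter> E))"
proof (cases "C' \<inter> C = {}")
  case False
  then obtain y where y: "y \<in> C'" "y \<in> C" by blast
  have C'_props: "C' \<in> D n'" "n0 \<le> n'" "\<beta> ^ j * measure M C' \<le> measure M (C' \<inter> E)"
    using C' unfolding stop_cubes_def by blast+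
  show ?thesis
  proof (cases "n \<le> n'")
    case True
    then have "C' \<subseteq> C" using cube_nested[of n n' C' C y] C'_props C stop_cubes_subset y by auto
    then show ?thesis using C'_props by (simp add: Int_absorb2 Int_assoc[symmetric])
  next
    case False
    then have "C \<subseteq> C'" using cube_nested[of n' n C C' y] C'_props C stop_cubes_subset y by auto
    then have "measure M (C' \<inter> E) < \<beta> ^ Suc j * measure M C'"
      using stop_cube_maximal[OF C] C'_props False by auto
    moreover have "\<beta> ^ Suc j * measure M C' \<le> \<beta> ^ j * measure M C'"
      using \<beta>_power_antimono[of j "Suc j"] by (intro mult_right_mono) auto
    ultimately show ?thesis using C'_props by linarith
  qed
qed simp

lemma measure_stop_cube_Int_stop_region_le:
  assumes C: "C \<in> stop_cubes (Suc j) n" and n: "n0 < n"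
  shows "measure M (C \<inter> stop_region j) \<le> measure M C / 2"
proof -
  obtain n' where n': "n = Suc n'" using n by (cases n) auto
  obtain x where "C \<in> D n" "x \<in> C" using C unfolding stop_cubes_def by blast
  then obtain P where P: "P \<in> D n'" "C \<subseteq> P" "\<alpha> * measure M P \<le> measure M C"
    using parent_cube n' by blast
  have P_sparse: "measure M (P \<inter> E) < \<beta> ^ Suc j * measure M P"
    using stop_cube_maximal[OF C P(1)] P(2) n n' by auto
  have C_sets: "C \<in> sets M" by (rule stop_cube_sets[OF C])
  have "\<beta> ^ j * measure M (stop_region j \<inter> C) \<le> measure M (stop_region j \<inter> (C \<inter> E))"
    by (rule cmult_measure_stop_region_le)
       (use \<beta>_pos C_sets E_sets stop_cube_density_in_next[OF C] in auto)
  also have "\<dots> \<le> measure M (P \<inter> E)"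
    using P cube_sets E_sets by (intro finite_measure_mono) auto
  also have "\<dots> < \<beta> ^ j * (\<beta> * measure M P)" using P_sparse by (simp add: mult_ac)
  finally have "measure M (C \<inter> stop_region j) < \<beta> * measure M P"
    using \<beta>_pos by (simp add: Int_commute)
  also have "\<beta> * measure M P \<le> measure M C / 2" using P unfolding \<beta>_def by simp
  finally show ?thesis by simp
qed

definition W :: "'a measure" where
  "W = density M (\<lambda>x. ennreal (w x))"

definition Wstar :: "'a measure" where
  "Wstar = density M (maximal_fn M D w)"

lemma sets_W [simp]: "sets W = sets M"
  unfolding W_def by simp

lemma sets_Wstar [simp]: "sets Wstar = sets M"
  unfolding Wstar_def by simp

lemma set_integral_w_nonneg: "0 \<le> (LINT x:X|M. w x)"
  unfolding set_lebesgue_integral_def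
  by (rule integral_nonneg_AE) (use w_nonneg in \<open>auto intro!: AE_I2 split: split_indicator\<close>)

lemma avg_w_nonneg: "0 \<le> avg M X w"
  unfolding avg_def using set_integral_w_nonneg by simp

lemma emeasure_W: assumes X: "X \<in> sets M" shows "emeasure W X = ennreal (LINT x:X|M. w x)"
proof -
  have "emeasure W X = (\<integral>\<^sup>+x. ennreal (w x) * indicator X x \<partial>M)"
    unfolding W_def by (rule emeasure_density) (use w_integrable X in measurable)
  also have "\<dots> = (\<integral>\<^sup>+x. ennreal (indicator X x *\<^sub>R w x) \<partial>M)"
    by (rule nn_integral_cong) (simp split: split_indicator)
  also have "\<dots> = ennreal (integral\<^sup>L M (\<lambda>x. indicator X x *\<^sub>R w x))"
    by (rule nn_integral_eq_integral)
       (use integrable_mult_indicator[OF X w_integrable] w_nonneg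
         in \<open>auto intro!: AE_I2 split: split_indicator\<close>)
  finally show ?thesis by (simp add: set_lebesgue_integral_def)
qed

lemma set_integral_cube_eq_avg:
  assumes "C \<in> D n" "C \<noteq> {}" shows "(LINT x:C|M. w x) = avg M C w * measure M C"
  using cube_measure_pos[OF assms] unfolding avg_def by simp

lemma avg_emeasure_le_Wstar:
  assumes C: "C \<in> D n" and X: "X \<in> sets M" "X \<subseteq> C"
  shows "ennreal (avg M C w) * emeasure M X \<le> emeasure Wstar X"
proof -
  have "ennreal (avg M C w) * emeasure M X = (\<integral>\<^sup>+x. ennreal (avg M C w) * indicator X x \<partial>M)"
    by (rule nn_integral_cmult_indicator[OF X(1), symmetric])
  also have "\<dots> \<le> (\<integral>\<^sup>+x. maximal_fn M D w x * indicator X x \<partial>M)"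
  proof (rule nn_integral_mono)
    fix x
    show "ennreal (avg M C w) * indicator X x \<le> maximal_fn M D w x * indicator X x"
    proof (cases "x \<in> X")
      case True
      then have "ennreal \<bar>avg M C w\<bar> \<le> maximal_fn M D w x"
        using X(2) by (intro avg_le_maximal_fn[OF C]) auto
      then show ?thesis using True avg_w_nonneg by simp
    qed simp
  qed
  also have "\<dots> = emeasure Wstar X"
    unfolding Wstar_def by (rule emeasure_density[OF maximal_fn_measurable X(1), symmetric])
  finally show ?thesis .
qed

lemma half_W_stop_cube_le_Wstar:
  assumes C: "C \<in> stop_cubes (Suc j) n" and n: "n0 < n"
  shows "ennreal (1/2) * emeasure W (C \<inter> space M) \<le> emeasure Wstar (C \<inter> (space M - stop_region j))"
proof -
  have C_cube: "C \<in> D n" "C \<noteq> {}" using C unfolding stop_cubes_def by blast+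
  have C_sets: "C \<in> sets M" by (rule stop_cube_sets[OF C])
  define X where "X = C \<inter> (space M - stop_region j)"
  have X_sets: "X \<in> sets M" unfolding X_def using C_sets stop_region_sets by blast
  have "measure M X = measure M C - measure M (C \<inter> stop_region j)"
    unfolding X_def using C_sets stop_region_sets
    by (metis Diff_Int_distrib Int_Diff Int_lower1 finite_measure_Diff sets.Int sets.Int_space_eq2)
  then have half_X: "measure M C / 2 \<le> measure M X"
    using measure_stop_cube_Int_stop_region_le[OF C n] by linarith
  have "ennreal (1/2) * emeasure W (C \<inter> space M) = ennreal (1/2) * ennreal (avg M C w * measure M C)"
    using C_sets by (simp add: emeasure_W set_integral_cube_eq_avg[OF C_cube])
  also have "\<dots> = ennreal (avg M C w * (measure M C / 2))"
    by (subst ennreal_mult[symmetric]) (use avg_w_nonneg in auto)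
  also have "\<dots> \<le> ennreal (avg M C w * measure M X)"
    using half_X avg_w_nonneg by (intro ennreal_leI mult_left_mono)
  also have "\<dots> = ennreal (avg M C w) * emeasure M X"
    by (simp add: emeasure_eq_measure ennreal_mult[OF avg_w_nonneg measure_nonneg])
  also have "\<dots> \<le> emeasure Wstar X"
    by (rule avg_emeasure_le_Wstar[OF C_cube(1) X_sets]) (simp add: X_def)
  finally show ?thesis unfolding X_def .
qed

lemma half_W_stop_region_le_Wstar:
  assumes level: "measure M E < \<beta> ^ Suc j * measure M Q0"
  shows "ennreal (1/2) * emeasure W (stop_region (Suc j) \<inter> space M)
    \<le> emeasure Wstar (stop_region (Suc j) \<inter> (space M - stop_region j))"
proof (rule cmult_emeasure_stop_region_le)
  fix n C assume C: "C \<in> stop_cubes (Suc j) n"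
  show "ennreal (1/2) * emeasure W (C \<inter> space M) \<le> emeasure Wstar (C \<inter> (space M - stop_region j))"
    by (rule half_W_stop_cube_le_Wstar[OF C stop_cube_level_gt[OF C level]])
qed (use stop_region_sets in auto)

lemma emeasure_Wstar_layers_le:
  assumes "k \<le> m" and level: "measure M E < \<beta> ^ m * measure M Q0"
  shows "ennreal (real k * (LINT x:E|M. w x) / 2) + emeasure Wstar (Q0 - stop_region k)
    \<le> emeasure Wstar Q0"
  using assms(1)
proof (induction k)
  case 0
  then show ?case by (simp add: emeasure_mono Q0_sets)
next
  case (Suc k)
  define wE where "wE = (LINT x:E|M. w x)"
  have wE: "0 \<le> wE" unfolding wE_def by (rule set_integral_w_nonneg)
  have "\<beta> ^ m * measure M Q0 \<le> \<beta> ^ Suc k * measure M Q0"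
    using \<beta>_power_antimono[OF Suc.prems] by (intro mult_right_mono) auto
  then have "ennreal (1/2) * emeasure W (stop_region (Suc k) \<inter> space M)
      \<le> emeasure Wstar (stop_region (Suc k) \<inter> (space M - stop_region k))"
    using level by (intro half_W_stop_region_le_Wstar) linarith
  moreover have "ennreal wE \<le> emeasure W (stop_region (Suc k) \<inter> space M)"
    unfolding wE_def emeasure_W[OF E_sets, symmetric]
    using E_subset_stop_region E_sets stop_region_sets sets.sets_into_space
    by (intro emeasure_mono) auto
  moreover have "ennreal (wE / 2) = ennreal (1/2) * ennreal wE"
    by (subst ennreal_mult[symmetric]) (use wE in auto)
  ultimately have layer: "ennreal (wE / 2) \<le> emeasure Wstar (stop_region (Suc k) \<inter> (space M - stop_region k))"
    by (metis mult_left_mono order_trans zero_le)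
  have decomp: "Q0 - stop_region k
      = (stop_region (Suc k) \<inter> (space M - stop_region k)) \<union> (Q0 - stop_region (Suc k))"
    using stop_region_mono[of k "Suc k"] stop_region_subset_Q0 sets.sets_into_space[OF Q0_sets] by auto
  have split: "emeasure Wstar (Q0 - stop_region k)
      = emeasure Wstar (stop_region (Suc k) \<inter> (space M - stop_region k)) + emeasure Wstar (Q0 - stop_region (Suc k))"
    unfolding decomp by (rule plus_emeasure[symmetric]) (use Q0_sets stop_region_sets in auto)
  have "ennreal (real (Suc k) * wE / 2) = ennreal (real k * wE / 2) + ennreal (wE / 2)"
    using wE by (simp add: ennreal_plus[symmetric] field_simps)
  then have "ennreal (real (Suc k) * wE / 2) + emeasure Wstar (Q0 - stop_region (Suc k))
      \<le> ennreal (real k * wE / 2) + emeasure Wstar (Q0 - stop_region k)"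
    using layer split by (simp add: add.assoc add_mono)
  also have "\<dots> \<le> emeasure Wstar Q0" using Suc unfolding wE_def by simp
  finally show ?case unfolding wE_def .
qed

lemma set_integral_le_emeasure_Wstar_Q0: "ennreal (LINT x:Q0|M. w x) \<le> emeasure Wstar Q0"
proof (cases "Q0 = {}")
  case True
  then show ?thesis by (simp add: set_lebesgue_integral_def)
next
  case False
  then have "ennreal (LINT x:Q0|M. w x) = ennreal (avg M Q0 w) * emeasure M Q0"
    by (simp add: set_integral_cube_eq_avg[OF Q0_cube] emeasure_eq_measure
        ennreal_mult[OF avg_w_nonneg measure_nonneg])
  also have "\<dots> \<le> emeasure Wstar Q0"
    by (rule avg_emeasure_le_Wstar[OF Q0_cube Q0_sets order_refl])
  finally show ?thesis .
qed

lemma nonneg_of_emeasure_Wstar_Q0_le: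
  assumes "emeasure Wstar Q0 \<le> ennreal (A * (LINT x:Q0|M. w x))"
  shows "0 \<le> A * (LINT x:Q0|M. w x)"
proof (rule ccontr)
  assume neg: "\<not> 0 \<le> A * (LINT x:Q0|M. w x)"
  then have "ennreal (LINT x:Q0|M. w x) \<le> 0"
    using set_integral_le_emeasure_Wstar_Q0 assms by (simp add: ennreal_neg)
  then have "(LINT x:Q0|M. w x) = 0" using set_integral_w_nonneg[of Q0] by simp
  then show False using neg by simp
qed

lemma layers_plus_remainder_le:
  assumes Wstar_Q0: "emeasure Wstar Q0 \<le> ennreal (A * (LINT x:Q0|M. w x))"
    and level: "measure M E < \<beta> ^ m * measure M Q0"
  shows "real m * (LINT x:E|M. w x) / 2 + avg M Q0 w * measure M (Q0 - stop_region m)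
    \<le> A * (LINT x:Q0|M. w x)"
proof -
  have Diff_sets: "Q0 - stop_region m \<in> sets M" using Q0_sets stop_region_sets by blast
  have nonneg: "0 \<le> real m * (LINT x:E|M. w x) / 2" "0 \<le> avg M Q0 w * measure M (Q0 - stop_region m)"
    using set_integral_w_nonneg avg_w_nonneg by simp_all
  have "ennreal (real m * (LINT x:E|M. w x) / 2 + avg M Q0 w * measure M (Q0 - stop_region m))
      = ennreal (real m * (LINT x:E|M. w x) / 2) + ennreal (avg M Q0 w) * emeasure M (Q0 - stop_region m)"
    using nonneg by (simp add: ennreal_plus emeasure_eq_measure ennreal_mult[OF avg_w_nonneg measure_nonneg])
  also have "\<dots> \<le> ennreal (real m * (LINT x:E|M. w x) / 2) + emeasure Wstar (Q0 - stop_region m)"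
    by (intro add_left_mono avg_emeasure_le_Wstar[OF Q0_cube Diff_sets]) auto
  also have "\<dots> \<le> emeasure Wstar Q0"
    by (rule emeasure_Wstar_layers_le[OF order_refl level])
  also have "\<dots> \<le> ennreal (A * (LINT x:Q0|M. w x))" by (rule Wstar_Q0)
  finally show ?thesis
    using nonneg_of_emeasure_Wstar_Q0_le[OF Wstar_Q0] by (simp add: ennreal_le_iff)
qed

lemma set_integral_E_le_Q0: "(LINT x:E|M. w x) \<le> (LINT x:Q0|M. w x)"
proof -
  have "ennreal (LINT x:E|M. w x) \<le> ennreal (LINT x:Q0|M. w x)"
    unfolding emeasure_W[OF E_sets, symmetric] emeasure_W[OF Q0_sets, symmetric]
    using E_subset_Q0 Q0_sets by (intro emeasure_mono) auto
  then show ?thesis using set_integral_w_nonneg by (simp add: ennreal_le_iff)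
qed

lemma fractional_layers_bound:
  assumes Wstar_Q0: "emeasure Wstar Q0 \<le> ennreal (A * (LINT x:Q0|M. w x))"
    and bracket: "\<beta> ^ Suc m * measure M Q0 \<le> measure M E" "measure M E < \<beta> ^ m * measure M Q0"
  shows "(LINT x:E|M. w x) * (real m / 2 + 1 - measure M E / (\<beta> ^ m * measure M Q0))
    \<le> A * (LINT x:Q0|M. w x)"
proof -
  define wE wQ mE mQ
    where "wE = (LINT x:E|M. w x)" and "wQ = (LINT x:Q0|M. w x)"
      and "mE = measure M E" and "mQ = measure M Q0"
  define r where "r = mE / (\<beta> ^ m * mQ)"
  have "0 < \<beta> ^ m * mQ" using bracket(2) measure_nonneg[of M E] unfolding mQ_def by linarith
  then have mQ: "0 < mQ" using zero_less_mult_pos[of "\<beta> ^ m" mQ] \<beta>_pos by simp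
  have r: "r < 1" "r * mQ = mE / \<beta> ^ m"
    using bracket mQ \<beta>_pos unfolding r_def mE_def mQ_def by (simp_all add: field_simps)
  have "\<beta> ^ m * measure M (stop_region m) \<le> mE"
    unfolding mE_def by (rule measure_stop_region_le)
  then have "measure M (stop_region m) \<le> r * mQ"
    unfolding r(2) using \<beta>_pos by (simp add: field_simps)
  moreover have "measure M (Q0 - stop_region m) = mQ - measure M (stop_region m)"
    unfolding mQ_def by (rule finite_measure_Diff[OF Q0_sets stop_region_sets stop_region_subset_Q0])
  ultimately have Diff: "mQ - r * mQ \<le> measure M (Q0 - stop_region m)" by linarith
  have avg_Q0: "avg M Q0 w * mQ = wQ" unfolding avg_def wQ_def mQ_def using mQ mQ_def by simp
  have "wE * (1 - r) \<le> wQ * (1 - r)"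
    using set_integral_E_le_Q0 r unfolding wE_def wQ_def by (intro mult_right_mono) auto
  also have "\<dots> = avg M Q0 w * (mQ - r * mQ)" unfolding avg_Q0[symmetric] by (simp add: algebra_simps)
  also have "\<dots> \<le> avg M Q0 w * measure M (Q0 - stop_region m)"
    using Diff avg_w_nonneg by (intro mult_left_mono)
  finally show ?thesis
    using layers_plus_remainder_le[OF Wstar_Q0 bracket(2)] unfolding wE_def wQ_def mE_def mQ_def r_def
    by (simp add: algebra_simps)
qed

lemma log_bound_nondegenerate:
  assumes Wstar_Q0: "emeasure Wstar Q0 \<le> ennreal (A * (LINT x:Q0|M. w x))"
    and E_pos: "0 < measure M E" and E_less: "measure M E < measure M Q0"
  shows "(LINT x:E|M. w x) * ln (measure M Q0 / measure M E)
    \<le> 2 * A * ln (2 / \<alpha>) * (LINT x:Q0|M. w x)"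
proof -
  have "\<beta> < 1" using \<beta>_le by simp
  then obtain m where bracket: "\<beta> ^ Suc m * measure M Q0 \<le> measure M E" "measure M E < \<beta> ^ m * measure M Q0"
    by (rule power_bracket[OF \<beta>_pos _ E_pos E_less])
  define t where "t = real m / 2 + 1 - measure M E / (\<beta> ^ m * measure M Q0)"
  have "1 / \<beta> = 2 / \<alpha>" unfolding \<beta>_def by simp
  then have "ln (measure M Q0 / measure M E) \<le> 2 * ln (2 / \<alpha>) * t"
    using ln_ratio_le_layers[OF \<beta>_pos \<beta>_le E_pos bracket] unfolding t_def by simp
  then have "(LINT x:E|M. w x) * ln (measure M Q0 / measure M E)
      \<le> (LINT x:E|M. w x) * (2 * ln (2 / \<alpha>) * t)"
    by (rule mult_left_mono[OF _ set_integral_w_nonneg])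
  also have "\<dots> = 2 * ln (2 / \<alpha>) * ((LINT x:E|M. w x) * t)" by (simp add: mult_ac)
  also have "\<dots> \<le> 2 * ln (2 / \<alpha>) * (A * (LINT x:Q0|M. w x))"
    using fractional_layers_bound[OF Wstar_Q0 bracket] \<alpha>_pos \<alpha>_le_half unfolding t_def
    by (intro mult_left_mono) auto
  finally show ?thesis by (simp add: mult_ac)
qed

lemma emeasure_Wstar_Q0_le:
  assumes "(\<integral>\<^sup>+ x\<in>Q0. maximal_fn M D w x \<partial>M) / emeasure M Q0 \<le> ennreal (A * avg M Q0 w)"
  shows "emeasure Wstar Q0 \<le> ennreal (A * (LINT x:Q0|M. w x))"
proof (cases "Q0 = {}")
  case False
  then have mQ: "0 < measure M Q0" by (rule cube_measure_pos[OF Q0_cube])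
  have "emeasure Wstar Q0 = (\<integral>\<^sup>+ x\<in>Q0. maximal_fn M D w x \<partial>M)"
    unfolding Wstar_def by (rule emeasure_density[OF maximal_fn_measurable Q0_sets])
  also have "\<dots> = (\<integral>\<^sup>+ x\<in>Q0. maximal_fn M D w x \<partial>M) / emeasure M Q0 * emeasure M Q0"
    using mQ by (simp add: emeasure_eq_measure ennreal_divide_times divide_self_if)
  also have "\<dots> \<le> ennreal (A * avg M Q0 w) * ennreal (measure M Q0)"
    using assms by (simp add: emeasure_eq_measure mult_right_mono)
  also have "\<dots> = ennreal (A * (LINT x:Q0|M. w x))"
    using mQ by (simp add: ennreal_mult''[symmetric] avg_def)
  finally show ?thesis .
qed simp

theorem weighted_log_bound:
  assumes "(\<integral>\<^sup>+ x\<in>Q0. maximal_fn M D w x \<partial>M) / emeasure M Q0 \<le> ennreal (A * avg M Q0 w)"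
  shows "(LINT x:E|M. w x) * ln (measure M Q0 / measure M E)
    \<le> 2 * A * ln (2 / \<alpha>) * (LINT x:Q0|M. w x)"
proof -
  have Wstar_Q0: "emeasure Wstar Q0 \<le> ennreal (A * (LINT x:Q0|M. w x))"
    by (rule emeasure_Wstar_Q0_le[OF assms])
  have "measure M E \<le> measure M Q0" by (rule finite_measure_mono[OF E_subset_Q0 Q0_sets])
  then consider "0 < measure M E" "measure M E < measure M Q0"
    | "measure M E = 0 \<or> measure M E = measure M Q0"
    using measure_nonneg[of M E] by (smt (verit))
  then show ?thesis
  proof cases
    case 1
    then show ?thesis by (rule log_bound_nondegenerate[OF Wstar_Q0])
  next
    case 2
    text \<open>Here the logarithm vanishes, for \<open>|E| = 0\<close> through \<open>x / 0 = 0\<close> and \<open>ln 0 = 0\<close>.\<close>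
    then have "ln (measure M Q0 / measure M E) = 0" by auto
    moreover have "0 \<le> 2 * ln (2 / \<alpha>) * (A * (LINT x:Q0|M. w x))"
      using nonneg_of_emeasure_Wstar_Q0_le[OF Wstar_Q0] \<alpha>_pos \<alpha>_le_half by simp
    ultimately show ?thesis by (simp add: mult_ac)
  qed
qed

end

theorem lemma4p2:
  fixes M :: "'a measure" and F D :: "nat \<Rightarrow> 'a set set"
    and \<alpha> A :: real and w :: "'a \<Rightarrow> real" and Q0 E :: "'a set"
  assumes "prob_space M"
    and "atomic_filtration M F D"
    and "homogeneous M D \<alpha>"
    and "0 < \<alpha>" and "\<alpha> \<le> 1/2"
    and "integrable M w" and "\<forall>x\<in>space M. 0 \<le> w x"
    and "Q0 \<in> (\<Union>n. D n)"
    and "(\<integral>\<^sup>+ x\<in>Q0. maximal_fn M D w x \<partial>M) / emeasure M Q0 \<le> ennreal (A * avg M Q0 w)"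
    and "\<exists>S \<subseteq> {K \<in> (\<Union>n. D n). K \<subseteq> Q0}. E = \<Union>S"
  shows "(LINT x:E|M. w x) * ln (measure M Q0 / measure M E)
           \<le> 2 * A * ln (2 / \<alpha>) * (LINT x:Q0|M. w x)"
proof -
  obtain n0 where "Q0 \<in> D n0" using assms(8) by blast
  then interpret cube_weight_setting M F D \<alpha> w Q0 E n0
    using assms
    by (simp add: cube_weight_setting_def cube_filtration_def cube_weight_setting_axioms_def)
  show ?thesis by (rule weighted_log_bound[OF assms(9)])
qed

end
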